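(* Let $\tau_2\ge 2$, $b>\tau_2$, and $\epsilon>0$ be such that \[\delta:=\frac{b(1-\epsilon)-\tau_2(1+\epsilon)^2}{\tau_2(b-1)(1+\epsilon)}\] satisfies $\delta-\epsilon>0$, and let $C_\epsilon>0$. Then there exists $M_*$ (depending on $\epsilon,b,\tau_2,C_\epsilon$) such that the following holds whenever $M\ge M_*$ and $M':=M^{b}$. Let $F,G:\mathbb{Z}\to\mathbb{C}$ satisfy \begin{align*} F(0)&=1, \qquad F(s)=0\ \text{ if }1\le|s|<M',\\ |F(s)|&\le C_\epsilon M'^{-1+\epsilon}\ \text{ if }M'\le|s|\le M'^{\tau_2(1+\epsilon/2)},\\ |F(s)|&\le\exp\big(-|s/M'^{\tau_2}|^{1/2}\big)\ \text{ if }|s|\ge M'^{\tau_2(1+\epsilon/2)}, \end{align*} and \begin{align*} |G(0)|&\le2,\qquad |G(s)|\le 2|s|^{-\delta+\epsilon}\ \text{ if }0<|s|\le M^{\tau_2(1+\epsilon)},\\ |G(s)|&\le\exp\big(-\tfrac12|s/M^{\tau_2}|^{1/2}\big)\ \text{ if }|s|\ge M^{\tau_2(1+\epsilon)}. \end{align*} Then, with $F*G(s)=\sum_{t\in\mathbb{Z}}F(t)G(s-t)$: (a) $|F*G(s)-G(s)|\le M'^{-\delta}$ if $|s|\le M^{\tau_2(1+\epsilon)}$; (b) $|F*G(s)|\le|s|^{-\delta+\epsilon}$ if $M^{\tau_2(1+\epsilon)}<|s|\le M'^{\tau_2(1+\epsilon)}$; (c) $|F*G(s)|\le\exp\big(-\tfrac12|s/M'^{\tau_2}|^{1/2}\big)$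 if $|s|>M'^{\tau_2(1+\epsilon)}$. *)

theory Defs
  imports "HOL-Analysis.Analysis"
begin

definition zconv :: "(int \<Rightarrow> complex) \<Rightarrow> (int \<Rightarrow> complex) \<Rightarrow> int \<Rightarrow> complex" where
  "zconv F G s = (\<Sum>\<^sub>\<infinity> t\<in>(UNIV::int set). F t * G (s - t))"

end

theory Submission
  imports Defs "HOL-Real_Asymp.Real_Asymp"
begin

text \<open>On all of \<open>\<int>\<close>,
  \<open>|F t|\<close> is at most a constant times the summable weight \<open>1/(1 + t^2)\<close>, so
  apart from finitely many terms the sum is dominated by that weight.  For
  \<open>|s| \<le> M^(\<tau>2(1+\<epsilon>))\<close> the term \<open>t = 0\<close> contributes \<open>G s\<close>, and every other term
  has \<open>|s - t| \<ge> M'/2\<close>, where \<open>G\<close> is stretched-exponentially small.  In the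
  middle range the terms with \<open>|s - t| < M^(\<tau>2(1+\<epsilon>))\<close> pair the small values of
  \<open>F\<close> (at most \<open>C\<epsilon> M'^(-1+\<epsilon>)\<close>, or a stretched exponential) with the power profile
  \<open>2|u|^(-\<delta>+\<epsilon>)\<close> of \<open>G\<close>, whose partial sums up to \<open>R\<close> grow like \<open>R^(1-\<delta>+\<epsilon>)\<close>;
  the defining identity of \<open>\<delta>\<close> is exactly what makes this beat \<open>|s|^(-\<delta>+\<epsilon>)\<close>.
  Beyond \<open>M'^(\<tau>2(1+\<epsilon>))\<close> one of \<open>|t|\<close>, \<open>|s - t|\<close> is large, and subadditivity of
  the square root turns the product of the two stretched exponentials into the
  claimed decay.  Every remaining error term is a power of \<open>M\<close> against a
  stretched exponential in \<open>M\<close>, hence negligible for large \<open>M\<close>.\<close>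

lemma powr_diff_ge:
  fixes a k :: real
  assumes "0 < a" "a < 1" "0 \<le> k"
  shows "(1 - a) * (k + 1) powr (-a) \<le> (k + 1) powr (1 - a) - k powr (1 - a)"
proof (cases "k = 0")
  case True
  then show ?thesis using assms by simp
next
  case False
  hence k: "k > 0" using assms by simp
  have young: "k powr (1 - a) * (k + 1) powr a \<le> (1 - a) * k + a * (k + 1)"
    using Youngs_inequality_0[of "1 - a" a k "k + 1"] assms k by simp
  have "k powr (1 - a) = k powr (1 - a) * (k + 1) powr a * (k + 1) powr (-a)"
    using k by (simp add: powr_minus field_simps)
  also have "\<dots> \<le> ((1 - a) * k + a * (k + 1)) * (k + 1) powr (-a)"
    using young by (intro mult_right_mono) auto
  also have "\<dots> = (k + 1) powr (1 - a) - (1 - a) * (k + 1) powr (-a)"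
    using k by (simp add: algebra_simps powr_diff powr_minus divide_simps)
  finally show ?thesis by simp
qed

definition power_profile :: "real \<Rightarrow> int \<Rightarrow> real" where
  "power_profile a u = (if u = 0 then 2 else 2 * real_of_int \<bar>u\<bar> powr (-a))"

lemma power_profile_nonneg: "0 \<le> power_profile a u"
  by (simp add: power_profile_def)

lemma sum_power_profile_le:
  assumes "0 < a" "a < 1"
  shows "(\<Sum>u\<in>{-int k..int k}. power_profile a u) \<le> 2 + 4 * real k powr (1 - a) / (1 - a)"
proof (induction k)
  case 0
  then show ?case by (simp add: power_profile_def)
next
  case (Suc k)
  have "{-int (Suc k)..int (Suc k)} = insert (int k + 1) (insert (- int k - 1) {-int k..int k})"
    by auto
  hence "(\<Sum>u\<in>{-int (Suc k)..int (Suc k)}. power_profile a u)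
      = 4 * (real k + 1) powr (-a) + (\<Sum>u\<in>{-int k..int k}. power_profile a u)"
    by (simp add: power_profile_def add.commute)
  also have "\<dots> \<le> 4 * (real k + 1) powr (-a) + (2 + 4 * real k powr (1 - a) / (1 - a))"
    using Suc by simp
  also have "\<dots> \<le> 2 + 4 * real (Suc k) powr (1 - a) / (1 - a)"
  proof -
    have "(real k + 1) powr (-a) \<le> ((real k + 1) powr (1 - a) - real k powr (1 - a)) / (1 - a)"
      using powr_diff_ge[of a "real k"] assms by (simp add: field_simps)
    thus ?thesis by (simp add: diff_divide_distrib add.commute)
  qed
  finally show ?case .
qed

lemma int_ball_subset:
  fixes s :: int and R :: real
  shows "{t. real_of_int \<bar>s - t\<bar> < R} \<subseteq> {s - \<lfloor>R\<rfloor> .. s + \<lfloor>R\<rfloor>}"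
  by (auto, linarith+)

lemma finite_int_ball: "finite {t::int. real_of_int \<bar>s - t\<bar> < R}"
  using int_ball_subset finite_subset by blast

lemma card_int_ball_le:
  fixes s :: int and R :: real
  assumes "R \<ge> 0"
  shows "real (card {t::int. real_of_int \<bar>s - t\<bar> < R}) \<le> 2 * R + 1"
proof -
  have "card {t::int. real_of_int \<bar>s - t\<bar> < R} \<le> card {s - \<lfloor>R\<rfloor> .. s + \<lfloor>R\<rfloor>}"
    by (rule card_mono[OF _ int_ball_subset]) simp
  also have "card {s - \<lfloor>R\<rfloor> .. s + \<lfloor>R\<rfloor>} = nat (2 * \<lfloor>R\<rfloor> + 1)" by simp
  finally show ?thesis using assms by linarith
qed

lemma sum_power_profile_ball_le:
  fixes s :: int and R a :: real
  assumes "R \<ge> 0" "0 < a" "a < 1"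
  shows "(\<Sum>t | real_of_int \<bar>s - t\<bar> < R. power_profile a (s - t)) \<le> 2 + 4 * R powr (1 - a) / (1 - a)"
proof -
  define k where "k = nat \<lfloor>R\<rfloor>"
  have "(\<Sum>t | real_of_int \<bar>s - t\<bar> < R. power_profile a (s - t))
      = (\<Sum>u\<in>(\<lambda>t. s - t) ` {t. real_of_int \<bar>s - t\<bar> < R}. power_profile a u)"
    by (subst sum.reindex) (auto simp: inj_on_def)
  also have "\<dots> \<le> (\<Sum>u\<in>{- int k .. int k}. power_profile a u)"
    by (rule sum_mono2) (auto simp: k_def power_profile_nonneg, linarith+)
  also have "\<dots> \<le> 2 + 4 * real k powr (1 - a) / (1 - a)"
    by (rule sum_power_profile_le[OF assms(2,3)])
  also have "\<dots> \<le> 2 + 4 * R powr (1 - a) / (1 - a)"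
  proof -
    have "real k powr (1 - a) \<le> R powr (1 - a)"
      using assms by (intro powr_mono2) (auto simp: k_def)
    thus ?thesis using assms by (simp add: divide_right_mono)
  qed
  finally show ?thesis .
qed

lemma exp_neg_sqrt_antimono:
  assumes "0 \<le> x" "x \<le> y" "0 < B" "0 \<le> c"
  shows "exp (- c * sqrt (y / B)) \<le> exp (- c * sqrt (x / B))"
proof -
  have "sqrt (x / B) \<le> sqrt (y / B)"
    using assms by (intro real_sqrt_le_mono divide_right_mono) auto
  thus ?thesis using assms by (simp add: mult_left_mono)
qed

definition sq_weight :: "int \<Rightarrow> real" where
  "sq_weight t = 1 / (1 + (real_of_int t)\<^sup>2)"

lemma sq_weight_pos: "0 < sq_weight t"
  unfolding sq_weight_def by (simp add: add_pos_nonneg)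

lemma sq_weight_le_1: "sq_weight t \<le> 1"
  unfolding sq_weight_def by (simp add: add_pos_nonneg)

lemma sq_weight_summable: "sq_weight summable_on UNIV"
proof -
  have nonneg: "\<And>t. 0 \<le> sq_weight t" using sq_weight_pos less_imp_le by blast
  have bound: "sq_weight (f n) \<le> inverse (real n ^ 2)"
    if "n \<ge> 1" "(real_of_int (f n))\<^sup>2 \<ge> (real n)\<^sup>2" for f :: "nat \<Rightarrow> int" and n
  proof -
    have "(real n)\<^sup>2 \<le> 1 + (real_of_int (f n))\<^sup>2" using that by linarith
    thus ?thesis using that by (simp add: sq_weight_def field_simps add_pos_nonneg)
  qed
  have "summable (\<lambda>n. sq_weight (int n))"
  proof (rule summable_comparison_test')
    show "summable (\<lambda>n::nat. inverse (real n ^ 2))" by (rule inverse_power_summable) auto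
    show "norm (sq_weight (int n)) \<le> inverse (real n ^ 2)" if "n \<ge> 1" for n
      using bound[of n int] that nonneg[of "int n"] by simp
  qed
  moreover have "summable (\<lambda>n. sq_weight (- int n - 1))"
  proof (rule summable_comparison_test')
    show "summable (\<lambda>n::nat. inverse (real n ^ 2))" by (rule inverse_power_summable) auto
    show "norm (sq_weight (- int n - 1)) \<le> inverse (real n ^ 2)" if "n \<ge> 1" for n
      using bound[of n "\<lambda>n. - int n - 1"] that nonneg[of "- int n - 1"]
      by (simp add: power2_eq_square algebra_simps)
  qed
  ultimately have "sq_weight summable_on range int" "sq_weight summable_on range (\<lambda>n. - int n - 1)"
    using nonneg by (subst summable_on_reindex;
        auto simp: inj_on_def o_def summable_on_UNIV_nonneg_real_iff)+
  hence "sq_weight summable_on (range int \<union> range (\<lambda>n. - int n - 1))"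
    by (rule summable_on_Un_disjoint) auto
  moreover have "range int \<union> range (\<lambda>n. - int n - 1) = UNIV"
  proof -
    have "x \<in> range int \<union> range (\<lambda>n. - int n - 1)" for x :: int
      by (cases "x \<ge> 0") (auto intro: image_eqI[of x _ "nat x"] image_eqI[of x _ "nat (- x - 1)"])
    thus ?thesis by blast
  qed
  ultimately show ?thesis by simp
qed

definition sq_weight_total :: real where
  "sq_weight_total = infsum sq_weight UNIV"

lemma sq_weight_total_ge_1: "1 \<le> sq_weight_total"
proof -
  have "infsum sq_weight {0} \<le> infsum sq_weight UNIV"
    by (rule infsum_mono_neutral) (auto simp: sq_weight_summable less_imp_le[OF sq_weight_pos])
  thus ?thesis by (simp add: sq_weight_total_def sq_weight_def)
qed

lemma norm_infsum_le_sum_plus_weight: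
  fixes f :: "int \<Rightarrow> complex"
  assumes "finite D" "\<And>t. t \<in> D \<Longrightarrow> norm (f t) \<le> h t"
    "\<And>t. t \<notin> D \<Longrightarrow> norm (f t) \<le> c * sq_weight t" "0 \<le> c"
  shows "f summable_on UNIV" "norm (infsum f UNIV) \<le> sum h D + c * sq_weight_total"
proof -
  define g where "g t = (if t \<in> D then h t else 0) + c * sq_weight t" for t
  have "((\<lambda>t. if t \<in> D then h t else 0) has_sum sum h D) UNIV"
    using assms(1) by (intro has_sum_finite_neutralI[of D]) auto
  hence fin_part: "(\<lambda>t. if t \<in> D then h t else 0) summable_on UNIV"
    "infsum (\<lambda>t. if t \<in> D then h t else 0) UNIV = sum h D"
    by (simp_all add: has_sum_iff)
  have weight_part: "(\<lambda>t. c * sq_weight t) summable_on UNIV"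
    using sq_weight_summable by (rule summable_on_cmult_right)
  have g_summable: "g summable_on UNIV"
    unfolding g_def using fin_part(1) weight_part by (rule summable_on_add)
  have le: "norm (f t) \<le> g t" for t
    using assms(2,3)[of t] assms(4) sq_weight_pos[of t] by (auto simp: g_def add_increasing2)
  have abs: "(\<lambda>t. norm (f t)) summable_on UNIV"
    by (rule summable_on_comparison_test[OF g_summable]) (use le in auto)
  thus "f summable_on UNIV" using abs_summable_summable by blast
  have "norm (infsum f UNIV) \<le> infsum (\<lambda>t. norm (f t)) UNIV"
    by (rule norm_infsum_bound[OF abs])
  also have "\<dots> \<le> infsum g UNIV"
    by (rule infsum_mono) (use abs g_summable le in auto)
  also have "\<dots> = sum h D + c * sq_weight_total"
    unfolding g_def sq_weight_total_def using fin_part weight_part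
    by (simp add: infsum_add infsum_cmult_right sq_weight_summable)
  finally show "norm (infsum f UNIV) \<le> sum h D + c * sq_weight_total" .
qed

lemma fourth_power_le_exp:
  fixes y :: real
  assumes "0 \<le> y"
  shows "y ^ 4 \<le> 65536 * exp (y / 4)"
proof -
  have "y / 16 \<le> exp (y / 16)" using exp_ge_add_one_self[of "y / 16"] by linarith
  hence "(y / 16) ^ 4 \<le> exp (y / 16) ^ 4" using assms by (intro power_mono) auto
  also have "exp (y / 16) ^ 4 = exp (y / 4)" by (simp add: exp_of_nat_mult[symmetric])
  finally show ?thesis by (simp add: power_divide)
qed

text \<open>The constant \<open>131072 = 2 * 16^4\<close> comes from \<open>1 + x^2 \<le> 2 x^2\<close> and
  \<open>y^4 \<le> 16^4 exp (y/4)\<close> for \<open>y = \<surd>(x/A)\<close>.\<close>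

lemma exp_neg_sqrt_mult_square_le:
  fixes A P r x :: real
  assumes "0 < A" "1 \<le> P" "131072 * A\<^sup>2 * exp (- sqrt (P / A) / 4) \<le> r" "P \<le> x"
  shows "exp (- (1/2) * sqrt (x / A)) * (1 + x\<^sup>2) \<le> r"
proof -
  define y where "y = sqrt (x / A)"
  have y: "0 \<le> y" "x = A * y\<^sup>2" "sqrt (P / A) \<le> y"
    unfolding y_def using assms
    by (auto intro!: real_sqrt_le_mono divide_right_mono)
  have "1 \<le> x * x" using assms mult_mono[of 1 x 1 x] by simp
  hence "1 + x\<^sup>2 \<le> 2 * x\<^sup>2" by (simp add: power2_eq_square)
  also have "\<dots> = 2 * A\<^sup>2 * y ^ 4"
    unfolding y(2) by (simp add: power_mult_distrib power_mult[symmetric])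
  also have "\<dots> \<le> 131072 * A\<^sup>2 * exp (y / 4)"
    using fourth_power_le_exp[OF y(1)] assms(1) by simp
  finally have "exp (- (1/2) * y) * (1 + x\<^sup>2) \<le> exp (- (1/2) * y) * (131072 * A\<^sup>2 * exp (y / 4))"
    by (intro mult_left_mono) auto
  also have "\<dots> = 131072 * A\<^sup>2 * exp (- y / 4)"
    by (simp add: exp_add[symmetric] algebra_simps)
  also have "\<dots> \<le> 131072 * A\<^sup>2 * exp (- sqrt (P / A) / 4)"
    using y(3) by (intro mult_left_mono) auto
  finally show ?thesis using assms(3) unfolding y_def by linarith
qed

text \<open>In the theorem \<open>Mp = M'\<close>, \<open>A = M'^\<tau>2\<close>, \<open>B = M^\<tau>2\<close>, \<open>N = M^(\<tau>2(1+\<epsilon>))\<close>,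
  \<open>P = M'^(\<tau>2(1+\<epsilon>/2))\<close>, \<open>Q = M'^(\<tau>2(1+\<epsilon>))\<close>, \<open>K = C\<epsilon> M'^(-1+\<epsilon>)\<close>, \<open>a = \<delta> - \<epsilon>\<close>
  and \<open>d = \<delta>\<close>; the assumptions are the facts about these scales that the three
  estimates need, all of which hold for large \<open>M\<close>.\<close>

locale conv_scales =
  fixes Mp A B N P Q K a d :: real
  assumes B_pos: "0 < B" and B_le_A: "B * 16 \<le> A"
    and N_pos: "0 < N" and N_le_Mp: "2 * N \<le> Mp" and N_le_Q: "N * 4 \<le> Q" and P_le_Q: "P * 2 \<le> Q"
    and P_ge_1: "1 \<le> P" and K_nonneg: "0 \<le> K" and a_pos: "0 < a" and a_less_1: "a < 1"
    and tail_le: "131072 * A\<^sup>2 * exp (- sqrt (P / A) / 4) \<le> 1 / (3 * sq_weight_total)"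
    and near_le: "exp (- (1/2) * sqrt (Mp / 2 / B)) * (1 + K * (1 + P\<^sup>2)) * sq_weight_total
      \<le> Mp powr (-d)"
    and middle_tail_le: "exp (- (1/2) * sqrt (N / B)) * (1 + K * (1 + P\<^sup>2)) * sq_weight_total
      \<le> Q powr (-a) / 3"
    and middle_K_le: "K * (2 + 4 * N powr (1 - a) / (1 - a)) \<le> Q powr (-a) / 3"
    and middle_exp_le: "exp (- sqrt (P / A)) * (2 + 4 * N powr (1 - a) / (1 - a)) \<le> Q powr (-a) / 3"
    and far_N_le: "6 * (2 * N + 1) \<le> exp (sqrt (Q / A) / 4)"
    and far_P_le: "3 * (2 * P + 1) * (1 + K * (1 + P\<^sup>2)) \<le> exp (sqrt (Q / A) / 2)"
begin

abbreviation L :: real where "L \<equiv> 1 + K * (1 + P\<^sup>2)"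

lemma A_pos: "0 < A" using B_pos B_le_A by linarith

lemma L_ge_1: "1 \<le> L" using K_nonneg by simp

lemma exp_tail_le_sq_weight:
  assumes "P \<le> real_of_int \<bar>t\<bar>"
  shows "exp (- (1/2) * sqrt (real_of_int \<bar>t\<bar> / A)) \<le> sq_weight t / (3 * sq_weight_total)"
proof -
  have "exp (- (1/2) * sqrt (real_of_int \<bar>t\<bar> / A)) * (1 + (real_of_int \<bar>t\<bar>)\<^sup>2) \<le> 1 / (3 * sq_weight_total)"
    by (rule exp_neg_sqrt_mult_square_le[OF A_pos P_ge_1 tail_le assms])
  hence "exp (- (1/2) * sqrt (real_of_int \<bar>t\<bar> / A))
      \<le> 1 / (3 * sq_weight_total) / (1 + (real_of_int \<bar>t\<bar>)\<^sup>2)"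
    by (subst pos_le_divide_eq) (auto simp: add_pos_nonneg)
  thus ?thesis unfolding sq_weight_def by (simp add: mult.commute)
qed

end

locale conv_setting = conv_scales +
  fixes F G :: "int \<Rightarrow> complex"
  assumes F_0: "F 0 = 1"
    and F_gap: "\<And>s. 1 \<le> \<bar>s\<bar> \<and> real_of_int \<bar>s\<bar> < Mp \<Longrightarrow> F s = 0"
    and F_middle: "\<And>s. Mp \<le> real_of_int \<bar>s\<bar> \<and> real_of_int \<bar>s\<bar> \<le> P \<Longrightarrow> norm (F s) \<le> K"
    and F_tail: "\<And>s. P \<le> real_of_int \<bar>s\<bar> \<Longrightarrow> norm (F s) \<le> exp (- sqrt (\<bar>real_of_int s / A\<bar>))"
    and G_0: "norm (G 0) \<le> 2"
    and G_middle: "\<And>s. 0 < \<bar>s\<bar> \<and> real_of_int \<bar>s\<bar> \<le> N \<Longrightarrow> norm (G s) \<le> 2 * real_of_int \<bar>s\<bar> powr (-a)"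
    and G_tail: "\<And>s. N \<le> real_of_int \<bar>s\<bar> \<Longrightarrow>
      norm (G s) \<le> exp (- (1/2) * sqrt (\<bar>real_of_int s / B\<bar>))"
begin

lemma F_tail_le: "P \<le> real_of_int \<bar>s\<bar> \<Longrightarrow> norm (F s) \<le> exp (- sqrt (real_of_int \<bar>s\<bar> / A))"
  using F_tail[of s] A_pos by (simp add: abs_divide)

lemma G_tail_le: "N \<le> real_of_int \<bar>s\<bar> \<Longrightarrow> norm (G s) \<le> exp (- (1/2) * sqrt (real_of_int \<bar>s\<bar> / B))"
  using G_tail[of s] B_pos by (simp add: abs_divide)

lemma norm_F_le_sq_weight: "norm (F t) \<le> L * sq_weight t"
proof -
  consider "t = 0" | "t \<noteq> 0" "real_of_int \<bar>t\<bar> < Mp"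
    | "Mp \<le> real_of_int \<bar>t\<bar>" "real_of_int \<bar>t\<bar> \<le> P" | "P \<le> real_of_int \<bar>t\<bar>"
    by linarith
  thus ?thesis
  proof cases
    case 1
    thus ?thesis using F_0 K_nonneg by (simp add: sq_weight_def)
  next
    case 2
    thus ?thesis using F_gap[of t] L_ge_1 sq_weight_pos[of t] by simp
  next
    case 3
    have "(real_of_int t)\<^sup>2 \<le> P\<^sup>2"
      using power_mono[of "\<bar>real_of_int t\<bar>" P 2] 3 by simp
    hence "K \<le> K * (1 + P\<^sup>2) / (1 + (real_of_int t)\<^sup>2)"
      using K_nonneg by (simp add: field_simps add_pos_nonneg mult_left_mono)
    also have "\<dots> \<le> L * sq_weight t"
      unfolding sq_weight_def by (simp add: divide_right_mono)
    finally show ?thesis using F_middle[of t] 3 by simp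
  next
    case 4
    have "norm (F t) \<le> exp (- sqrt (real_of_int \<bar>t\<bar> / A))" by (rule F_tail_le[OF 4])
    also have "\<dots> \<le> exp (- (1/2) * sqrt (real_of_int \<bar>t\<bar> / A))" using A_pos by simp
    also have "\<dots> \<le> sq_weight t / (3 * sq_weight_total)" by (rule exp_tail_le_sq_weight[OF 4])
    also have "\<dots> \<le> sq_weight t / 1"
      using sq_weight_total_ge_1 sq_weight_pos[of t] by (intro divide_left_mono) auto
    also have "\<dots> \<le> L * sq_weight t" using L_ge_1 sq_weight_pos[of t] by simp
    finally show ?thesis .
  qed
qed

lemma norm_F_le_off_origin: "t \<noteq> 0 \<Longrightarrow> norm (F t) \<le> max K (exp (- sqrt (P / A)))"
proof -
  assume t: "t \<noteq> 0"
  consider "real_of_int \<bar>t\<bar> < Mp" | "Mp \<le> real_of_int \<bar>t\<bar>" "real_of_int \<bar>t\<bar> \<le> P"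
    | "P \<le> real_of_int \<bar>t\<bar>" by linarith
  thus ?thesis
  proof cases
    case 1 thus ?thesis using F_gap[of t] t K_nonneg by simp
  next
    case 2 thus ?thesis using F_middle[of t] by simp
  next
    case 3
    have "norm (F t) \<le> exp (- 1 * sqrt (real_of_int \<bar>t\<bar> / A))" using F_tail_le[OF 3] by simp
    also have "\<dots> \<le> exp (- 1 * sqrt (P / A))"
      using exp_neg_sqrt_antimono[of P "real_of_int \<bar>t\<bar>" A 1] 3 P_ge_1 A_pos by simp
    finally show ?thesis by simp
  qed
qed

lemma norm_G_le_2: "norm (G u) \<le> 2"
proof -
  consider "u = 0" | "u \<noteq> 0" "real_of_int \<bar>u\<bar> \<le> N" | "N \<le> real_of_int \<bar>u\<bar>" by linarith
  thus ?thesis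
  proof cases
    case 1 thus ?thesis using G_0 by simp
  next
    case 2
    have "1 \<le> real_of_int \<bar>u\<bar> powr a" using 2 a_pos by (intro ge_one_powr_ge_zero) auto
    hence "real_of_int \<bar>u\<bar> powr (-a) \<le> 1" by (simp add: powr_minus_divide divide_le_eq_1)
    thus ?thesis using G_middle[of u] 2 by simp
  next
    case 3
    have "exp (- (1/2) * sqrt (real_of_int \<bar>u\<bar> / B)) \<le> 1" using B_pos by simp
    from order_trans[OF G_tail_le[OF 3] this] show ?thesis by simp
  qed
qed

lemma conv_minus_G_near:
  assumes s: "real_of_int \<bar>s\<bar> \<le> N"
  shows "norm (zconv F G s - G s) \<le> Mp powr (-d)"
proof -
  define \<gamma> where "\<gamma> = exp (- (1/2) * sqrt (Mp / 2 / B))"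
  define f where "f t = (if t = 0 then 0 else F t * G (s - t))" for t
  have f_le: "norm (f t) \<le> (\<gamma> * L) * sq_weight t" for t
  proof (cases "t = 0 \<or> real_of_int \<bar>t\<bar> < Mp")
    case True
    hence "f t = 0" using F_gap[of t] by (auto simp: f_def)
    thus ?thesis using L_ge_1 sq_weight_pos[of t] by (simp add: \<gamma>_def)
  next
    case False
    hence t: "t \<noteq> 0" "Mp \<le> real_of_int \<bar>t\<bar>" by auto
    \<comment> \<open>\<open>|s| \<le> N \<le> Mp/2\<close> keeps \<open>s - t\<close> at distance at least \<open>Mp/2\<close> from the origin\<close>
    have far: "Mp / 2 \<le> real_of_int \<bar>s - t\<bar>" "N \<le> real_of_int \<bar>s - t\<bar>"
      using t s N_le_Mp by linarith+
    have "norm (G (s - t)) \<le> exp (- (1/2) * sqrt (real_of_int \<bar>s - t\<bar> / B))"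
      by (rule G_tail_le[OF far(2)])
    also have "\<dots> \<le> \<gamma>"
      unfolding \<gamma>_def by (rule exp_neg_sqrt_antimono) (use far N_le_Mp N_pos B_pos in auto)
    finally have "norm (G (s - t)) \<le> \<gamma>" .
    hence "norm (F t) * norm (G (s - t)) \<le> (L * sq_weight t) * \<gamma>"
      using norm_F_le_sq_weight L_ge_1 sq_weight_pos[of t] by (intro mult_mono) auto
    thus ?thesis using t by (simp add: f_def norm_mult algebra_simps)
  qed
  have "0 \<le> \<gamma> * L" using L_ge_1 by (simp add: \<gamma>_def)
  hence f_bound: "f summable_on UNIV" "norm (infsum f UNIV) \<le> \<gamma> * L * sq_weight_total"
    using norm_infsum_le_sum_plus_weight[of "{}" f "\<lambda>_. 0" "\<gamma> * L"] f_le by auto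
  have origin: "((\<lambda>t. if t = 0 then G s else 0) has_sum G s) UNIV"
    by (rule has_sum_finite_neutralI[of "{0}"]) auto
  have "(\<lambda>t. f t + (if t = 0 then G s else 0)) = (\<lambda>t. F t * G (s - t))"
    by (auto simp: f_def F_0)
  hence "((\<lambda>t. F t * G (s - t)) has_sum (infsum f UNIV + G s)) UNIV"
    using has_sum_add[OF has_sum_infsum[OF f_bound(1)] origin] by simp
  hence "zconv F G s = infsum f UNIV + G s"
    unfolding zconv_def by (rule infsumI)
  thus ?thesis using f_bound(2) near_le unfolding \<gamma>_def by simp
qed

lemma norm_conv_middle:
  assumes s: "N < real_of_int \<bar>s\<bar>" "real_of_int \<bar>s\<bar> \<le> Q"
  shows "norm (zconv F G s) \<le> real_of_int \<bar>s\<bar> powr (-a)"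
proof -
  define D where "D = {t. real_of_int \<bar>s - t\<bar> < N}"
  define K' where "K' = max K (exp (- sqrt (P / A)))"
  define \<gamma> where "\<gamma> = exp (- (1/2) * sqrt (N / B))"
  define X where "X = 2 + 4 * N powr (1 - a) / (1 - a)"
  have K'_nonneg: "0 \<le> K'" using K_nonneg by (simp add: K'_def)
  have in_D: "norm (F t * G (s - t)) \<le> K' * power_profile a (s - t)" if "t \<in> D" for t
  proof -
    have "t \<noteq> 0" using that s unfolding D_def by auto
    moreover have "norm (G (s - t)) \<le> power_profile a (s - t)"
      using G_0 G_middle[of "s - t"] that by (auto simp: power_profile_def D_def)
    ultimately show ?thesis
      using norm_F_le_off_origin K'_nonneg unfolding norm_mult K'_def by (intro mult_mono) auto
  qed
  have off_D: "norm (F t * G (s - t)) \<le> (\<gamma> * L) * sq_weight t" if "t \<notin> D" for t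
  proof -
    have far: "N \<le> real_of_int \<bar>s - t\<bar>" using that unfolding D_def by simp
    have "norm (G (s - t)) \<le> exp (- (1/2) * sqrt (real_of_int \<bar>s - t\<bar> / B))"
      by (rule G_tail_le[OF far])
    also have "\<dots> \<le> \<gamma>"
      unfolding \<gamma>_def by (rule exp_neg_sqrt_antimono) (use far N_pos B_pos in auto)
    finally have "norm (G (s - t)) \<le> \<gamma>" .
    hence "norm (F t) * norm (G (s - t)) \<le> (L * sq_weight t) * \<gamma>"
      using norm_F_le_sq_weight L_ge_1 sq_weight_pos[of t] by (intro mult_mono) auto
    thus ?thesis by (simp add: norm_mult algebra_simps)
  qed
  have "0 \<le> \<gamma> * L" using L_ge_1 by (simp add: \<gamma>_def)
  moreover have "finite D" unfolding D_def by (rule finite_int_ball)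
  ultimately have "norm (zconv F G s) \<le> (\<Sum>t\<in>D. K' * power_profile a (s - t)) + \<gamma> * L * sq_weight_total"
    unfolding zconv_def using in_D off_D by (intro norm_infsum_le_sum_plus_weight(2)) auto
  also have "(\<Sum>t\<in>D. K' * power_profile a (s - t)) \<le> K' * X"
    unfolding sum_distrib_left[symmetric] D_def X_def
    by (rule mult_left_mono[OF sum_power_profile_ball_le K'_nonneg]) (use N_pos a_pos a_less_1 in auto)
  also have "K' * X \<le> Q powr (-a) / 3"
  proof -
    have "0 \<le> X" unfolding X_def using a_less_1 by simp
    thus ?thesis using middle_K_le middle_exp_le unfolding K'_def X_def
      by (simp add: max_mult_distrib_right)
  qed
  also have "\<gamma> * L * sq_weight_total \<le> Q powr (-a) / 3"
    using middle_tail_le by (simp add: \<gamma>_def)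
  also have "Q powr (-a) / 3 + Q powr (-a) / 3 \<le> real_of_int \<bar>s\<bar> powr (-a)"
  proof -
    have "Q powr (-a) \<le> real_of_int \<bar>s\<bar> powr (-a)"
      by (rule powr_mono2') (use a_pos s N_pos in auto)
    thus ?thesis using powr_ge_zero[of Q "-a"] by linarith
  qed
  finally show ?thesis by simp
qed

lemma norm_conv_term_near_s:
  assumes s: "Q < real_of_int \<bar>s\<bar>" and t: "real_of_int \<bar>s - t\<bar> < N"
  shows "norm (F t * G (s - t)) \<le> 2 * exp (- (3/4) * sqrt (real_of_int \<bar>s\<bar> / A))"
proof -
  have "\<bar>s\<bar> \<le> \<bar>t\<bar> + \<bar>s - t\<bar>" by arith
  hence t_large: "(3/4)\<^sup>2 * real_of_int \<bar>s\<bar> \<le> real_of_int \<bar>t\<bar>"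
    using s t N_le_Q N_pos by (simp add: power2_eq_square)
  hence "P \<le> real_of_int \<bar>t\<bar>" using s P_le_Q N_pos N_le_Q by (simp add: power2_eq_square)
  hence "norm (F t) \<le> exp (- 1 * sqrt (real_of_int \<bar>t\<bar> / A))" using F_tail_le by simp
  also have "\<dots> \<le> exp (- 1 * sqrt ((3/4)\<^sup>2 * real_of_int \<bar>s\<bar> / A))"
    by (rule exp_neg_sqrt_antimono) (use t_large A_pos in auto)
  also have "sqrt ((3/4)\<^sup>2 * real_of_int \<bar>s\<bar> / A) = (3/4) * sqrt (real_of_int \<bar>s\<bar> / A)"
    by (simp add: real_sqrt_mult real_sqrt_divide)
  finally have "norm (F t) \<le> exp (- (3/4) * sqrt (real_of_int \<bar>s\<bar> / A))" by simp
  thus ?thesis using norm_G_le_2[of "s - t"] unfolding norm_mult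
    by (subst mult.commute) (intro mult_mono, auto)
qed

lemma norm_conv_term_near_origin:
  assumes s: "Q < real_of_int \<bar>s\<bar>" and t: "real_of_int \<bar>t\<bar> < P"
  shows "norm (F t * G (s - t)) \<le> L * exp (- sqrt (real_of_int \<bar>s\<bar> / A))"
proof -
  have "\<bar>s\<bar> \<le> \<bar>t\<bar> + \<bar>s - t\<bar>" by arith
  hence st: "real_of_int \<bar>s\<bar> / 2 \<le> real_of_int \<bar>s - t\<bar>" using s t P_le_Q by linarith
  hence "N \<le> real_of_int \<bar>s - t\<bar>" using s N_le_Q N_pos by linarith
  hence "norm (G (s - t)) \<le> exp (- (1/2) * sqrt (real_of_int \<bar>s - t\<bar> / B))" by (rule G_tail_le)
  also have "\<dots> \<le> exp (- (1/2) * sqrt (real_of_int \<bar>s\<bar> / 2 / B))"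
    by (rule exp_neg_sqrt_antimono) (use st B_pos in auto)
  also have "\<dots> \<le> exp (- (1/2) * sqrt (2\<^sup>2 * (real_of_int \<bar>s\<bar> / A)))"
  proof -
    have "B * 8 * real_of_int \<bar>s\<bar> \<le> A * real_of_int \<bar>s\<bar>"
      using B_le_A B_pos by (intro mult_right_mono) auto
    hence "2\<^sup>2 * (real_of_int \<bar>s\<bar> / A) \<le> real_of_int \<bar>s\<bar> / 2 / B"
      using B_pos A_pos by (simp add: field_simps)
    thus ?thesis by (simp add: real_sqrt_le_mono)
  qed
  also have "sqrt (2\<^sup>2 * (real_of_int \<bar>s\<bar> / A)) = 2 * sqrt (real_of_int \<bar>s\<bar> / A)"
    by (simp add: real_sqrt_mult real_sqrt_divide)
  finally have "norm (G (s - t)) \<le> exp (- sqrt (real_of_int \<bar>s\<bar> / A))" by simp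
  moreover have "norm (F t) \<le> L"
    using norm_F_le_sq_weight[of t] sq_weight_le_1[of t] L_ge_1 mult_left_le[of "sq_weight t" L]
    by linarith
  ultimately show ?thesis unfolding norm_mult using L_ge_1 by (intro mult_mono) auto
qed

text \<open>The square root is subadditive, so \<open>\<surd>|t| + \<surd>|s-t|/2 \<ge> \<surd>|s|/2 + \<surd>|t|/2\<close>; the
  leftover factor \<open>exp (-\<surd>(|t|/A)/2)\<close> is summable against the weight.\<close>

lemma norm_conv_term_far:
  assumes t: "P \<le> real_of_int \<bar>t\<bar>" and st: "N \<le> real_of_int \<bar>s - t\<bar>"
  shows "norm (F t * G (s - t))
    \<le> exp (- (1/2) * sqrt (real_of_int \<bar>s\<bar> / A)) / (3 * sq_weight_total) * sq_weight t"
proof -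
  define x where "x = sqrt (real_of_int \<bar>t\<bar> / A)"
  define y where "y = sqrt (real_of_int \<bar>s - t\<bar> / A)"
  define z where "z = sqrt (real_of_int \<bar>s\<bar> / A)"
  have "norm (G (s - t)) \<le> exp (- (1/2) * sqrt (real_of_int \<bar>s - t\<bar> / B))"
    by (rule G_tail_le[OF st])
  also have "\<dots> \<le> exp (- (1/2) * y)"
  proof -
    have "real_of_int \<bar>s - t\<bar> / A \<le> real_of_int \<bar>s - t\<bar> / B"
      using B_le_A B_pos by (intro divide_left_mono) auto
    thus ?thesis unfolding y_def by (simp add: real_sqrt_le_mono)
  qed
  finally have G_le: "norm (G (s - t)) \<le> exp (- (1/2) * y)" .
  have "z \<le> sqrt (real_of_int \<bar>t\<bar> / A + real_of_int \<bar>s - t\<bar> / A)"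
  proof -
    have "\<bar>s\<bar> \<le> \<bar>t\<bar> + \<bar>s - t\<bar>" by arith
    hence "real_of_int \<bar>s\<bar> / A \<le> real_of_int \<bar>t\<bar> / A + real_of_int \<bar>s - t\<bar> / A"
      using A_pos by (simp add: add_divide_distrib[symmetric] divide_right_mono)
    thus ?thesis unfolding z_def by (rule real_sqrt_le_mono)
  qed
  also have "\<dots> \<le> x + y" unfolding x_def y_def
    by (rule sqrt_add_le_add_sqrt) (use A_pos in auto)
  finally have z_le: "z \<le> x + y" .
  have "norm (F t * G (s - t)) \<le> exp (- x) * exp (- (1/2) * y)"
    unfolding norm_mult x_def using F_tail_le[OF t] G_le by (intro mult_mono) auto
  also have "\<dots> \<le> exp (- (1/2) * z) * exp (- (1/2) * x)"
    using z_le by (simp add: exp_add[symmetric])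
  also have "\<dots> \<le> exp (- (1/2) * z) * (sq_weight t / (3 * sq_weight_total))"
    unfolding x_def using exp_tail_le_sq_weight[OF t] by (intro mult_left_mono) auto
  finally show ?thesis unfolding z_def by simp
qed

lemma norm_conv_far:
  assumes s: "Q < real_of_int \<bar>s\<bar>"
  shows "norm (zconv F G s) \<le> exp (- (1/2) * sqrt (\<bar>real_of_int s / A\<bar>))"
proof -
  define z where "z = sqrt (real_of_int \<bar>s\<bar> / A)"
  define D1 where "D1 = {t. real_of_int \<bar>s - t\<bar> < N}"
  define D2 where "D2 = {t. real_of_int \<bar>0 - t\<bar> < P}"
  define h where "h t = (if t \<in> D1 then 2 * exp (- (3/4) * z) else L * exp (- z))" for t
  have z_ge: "sqrt (Q / A) \<le> z"
    unfolding z_def using s A_pos by (intro real_sqrt_le_mono divide_right_mono) auto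
  have fin: "finite D1" "finite D2" unfolding D1_def D2_def by (rule finite_int_ball)+
  have disj: "D1 \<inter> D2 = {}"
  proof -
    have "\<bar>s\<bar> \<le> \<bar>t\<bar> + \<bar>s - t\<bar>" for t by arith
    thus ?thesis using s N_le_Q P_le_Q unfolding D1_def D2_def by fastforce
  qed
  have "norm (zconv F G s)
      \<le> sum h (D1 \<union> D2) + exp (- (1/2) * z) / (3 * sq_weight_total) * sq_weight_total"
    unfolding zconv_def
  proof (rule norm_infsum_le_sum_plus_weight(2))
    show "norm (F t * G (s - t)) \<le> h t" if "t \<in> D1 \<union> D2" for t
      using that disj norm_conv_term_near_s[OF s] norm_conv_term_near_origin[OF s]
      unfolding h_def D1_def D2_def z_def by auto
    show "norm (F t * G (s - t)) \<le> exp (- (1/2) * z) / (3 * sq_weight_total) * sq_weight t"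
      if "t \<notin> D1 \<union> D2" for t
      using that norm_conv_term_far unfolding D1_def D2_def z_def by auto
  qed (use fin sq_weight_total_ge_1 in auto)
  also have "sum h (D1 \<union> D2) = real (card D1) * (2 * exp (- (3/4) * z)) + real (card D2) * (L * exp (- z))"
  proof -
    have "sum h D2 = sum (\<lambda>_. L * exp (- z)) D2"
      using disj by (intro sum.cong) (auto simp: h_def)
    thus ?thesis using disj fin by (simp add: sum.union_disjoint h_def)
  qed
  also have "\<dots> \<le> (2 * N + 1) * (2 * exp (- (3/4) * z)) + (2 * P + 1) * (L * exp (- z))"
    using card_int_ball_le[of N s] card_int_ball_le[of P 0] N_pos P_ge_1 L_ge_1
    unfolding D1_def D2_def by (intro add_mono mult_right_mono) auto
  also have "(2 * N + 1) * (2 * exp (- (3/4) * z)) \<le> exp (- (1/2) * z) / 3"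
  proof -
    have "6 * (2 * N + 1) \<le> exp (z / 4)" using far_N_le z_ge by (simp add: order_trans)
    hence "6 * (2 * N + 1) * exp (- (3/4) * z) \<le> exp (z / 4) * exp (- (3/4) * z)" by simp
    thus ?thesis by (simp add: exp_add[symmetric] algebra_simps)
  qed
  also have "(2 * P + 1) * (L * exp (- z)) \<le> exp (- (1/2) * z) / 3"
  proof -
    have "3 * (2 * P + 1) * L \<le> exp (z / 2)" using far_P_le z_ge by (simp add: order_trans)
    hence "3 * (2 * P + 1) * L * exp (- z) \<le> exp (z / 2) * exp (- z)" by simp
    thus ?thesis by (simp add: exp_add[symmetric] algebra_simps)
  qed
  finally show ?thesis using sq_weight_total_ge_1 A_pos unfolding z_def by (simp add: abs_divide)
qed

end

lemma (in conv_scales) conv_estimates: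
  "\<forall>F G :: int \<Rightarrow> complex.
      (F 0 = 1 \<and>
       (\<forall>s. 1 \<le> \<bar>s\<bar> \<and> real_of_int \<bar>s\<bar> < Mp \<longrightarrow> F s = 0) \<and>
       (\<forall>s. Mp \<le> real_of_int \<bar>s\<bar> \<and> real_of_int \<bar>s\<bar> \<le> P \<longrightarrow> norm (F s) \<le> K) \<and>
       (\<forall>s. real_of_int \<bar>s\<bar> \<ge> P \<longrightarrow> norm (F s) \<le> exp (- sqrt (\<bar>real_of_int s / A\<bar>))) \<and>
       norm (G 0) \<le> 2 \<and>
       (\<forall>s. 0 < \<bar>s\<bar> \<and> real_of_int \<bar>s\<bar> \<le> N \<longrightarrow> norm (G s) \<le> 2 * real_of_int \<bar>s\<bar> powr (-a)) \<and>
       (\<forall>s. real_of_int \<bar>s\<bar> \<ge> N \<longrightarrow> norm (G s) \<le> exp (- (1/2) * sqrt (\<bar>real_of_int s / B\<bar>))))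
      \<longrightarrow>
      (\<forall>s. real_of_int \<bar>s\<bar> \<le> N \<longrightarrow> norm (zconv F G s - G s) \<le> Mp powr (-d)) \<and>
      (\<forall>s. N < real_of_int \<bar>s\<bar> \<and> real_of_int \<bar>s\<bar> \<le> Q \<longrightarrow> norm (zconv F G s) \<le> real_of_int \<bar>s\<bar> powr (-a)) \<and>
      (\<forall>s. real_of_int \<bar>s\<bar> > Q \<longrightarrow> norm (zconv F G s) \<le> exp (- (1/2) * sqrt (\<bar>real_of_int s / A\<bar>)))"
proof (intro allI impI)
  fix F G :: "int \<Rightarrow> complex"
  assume "F 0 = 1 \<and>
       (\<forall>s. 1 \<le> \<bar>s\<bar> \<and> real_of_int \<bar>s\<bar> < Mp \<longrightarrow> F s = 0) \<and>
       (\<forall>s. Mp \<le> real_of_int \<bar>s\<bar> \<and> real_of_int \<bar>s\<bar> \<le> P \<longrightarrow> norm (F s) \<le> K) \<and>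
       (\<forall>s. real_of_int \<bar>s\<bar> \<ge> P \<longrightarrow> norm (F s) \<le> exp (- sqrt (\<bar>real_of_int s / A\<bar>))) \<and>
       norm (G 0) \<le> 2 \<and>
       (\<forall>s. 0 < \<bar>s\<bar> \<and> real_of_int \<bar>s\<bar> \<le> N \<longrightarrow> norm (G s) \<le> 2 * real_of_int \<bar>s\<bar> powr (-a)) \<and>
       (\<forall>s. real_of_int \<bar>s\<bar> \<ge> N \<longrightarrow> norm (G s) \<le> exp (- (1/2) * sqrt (\<bar>real_of_int s / B\<bar>)))"
  then interpret conv_setting Mp A B N P Q K a d F G
    by unfold_locales auto
  show "(\<forall>s. real_of_int \<bar>s\<bar> \<le> N \<longrightarrow> norm (zconv F G s - G s) \<le> Mp powr (-d)) \<and>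
      (\<forall>s. N < real_of_int \<bar>s\<bar> \<and> real_of_int \<bar>s\<bar> \<le> Q \<longrightarrow> norm (zconv F G s) \<le> real_of_int \<bar>s\<bar> powr (-a)) \<and>
      (\<forall>s. real_of_int \<bar>s\<bar> > Q \<longrightarrow> norm (zconv F G s) \<le> exp (- (1/2) * sqrt (\<bar>real_of_int s / A\<bar>)))"
    using conv_minus_G_near norm_conv_middle norm_conv_far by blast
qed

text \<open>The defining identity \<open>\<delta> \<tau> (b - 1)(1 + \<epsilon>) = b(1 - \<epsilon>) - \<tau>(1 + \<epsilon>)^2\<close> is what
  makes the middle-range error \<open>M'^(-1+\<epsilon>) N^(1-a)\<close> smaller than \<open>Q^(-a)\<close>, where
  \<open>a = \<delta> - \<epsilon>\<close>; the last conclusion is that comparison of exponents of \<open>M\<close>.\<close>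

lemma delta_exponent_bounds:
  fixes \<tau> b \<epsilon> \<delta> :: real
  assumes "2 \<le> \<tau>" "\<tau> < b" "0 < \<epsilon>" "\<epsilon> < \<delta>"
    and \<delta>: "\<delta> = (b * (1 - \<epsilon>) - \<tau> * (1 + \<epsilon>)\<^sup>2) / (\<tau> * (b - 1) * (1 + \<epsilon>))"
  shows "\<delta> - \<epsilon> < 1" "\<tau> * (1 + \<epsilon>) < b"
    "b * (-1 + \<epsilon>) + \<tau> * (1 + \<epsilon>) * (1 - (\<delta> - \<epsilon>)) < - (b * \<tau> * (1 + \<epsilon>) * (\<delta> - \<epsilon>))"
proof -
  define num where "num = b * (1 - \<epsilon>) - \<tau> * (1 + \<epsilon>)\<^sup>2"
  define den where "den = \<tau> * (b - 1) * (1 + \<epsilon>)"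
  have den_pos: "0 < den" unfolding den_def using assms by simp
  have key: "\<delta> * den = num" using den_pos unfolding \<delta> num_def[symmetric] den_def[symmetric] by simp
  have "\<epsilon> * den < \<delta> * den" using assms(4) den_pos by simp
  hence num_pos: "0 < num" using key assms(3) den_pos by (smt (verit) mult_pos_pos)
  have "\<tau> * (1 + \<epsilon>) \<le> \<tau> * (1 + \<epsilon>)\<^sup>2" using assms by (simp add: power2_eq_square)
  moreover have "b * (1 - \<epsilon>) \<le> b" using assms by (simp add: algebra_simps)
  ultimately show "\<tau> * (1 + \<epsilon>) < b" using num_pos unfolding num_def by linarith
  have "num < b" unfolding num_def using assms
    by (smt (verit) mult_pos_pos zero_less_power mult_le_cancel_left1)
  also have "b \<le> 2 * (b - 1) * (1 + \<epsilon>)" using assms by (smt (verit) mult_le_cancel_left1)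
  also have "\<dots> \<le> den" unfolding den_def using assms by (intro mult_right_mono) auto
  finally have "\<delta> < 1" using key den_pos by (smt (verit) mult_less_cancel_right2)
  thus "\<delta> - \<epsilon> < 1" using assms(3) by simp
  have "b * (-1 + \<epsilon>) + \<tau> * (1 + \<epsilon>) * (1 - (\<delta> - \<epsilon>)) + b * \<tau> * (1 + \<epsilon>) * (\<delta> - \<epsilon>)
      = - (\<epsilon> * b * \<tau> * (1 + \<epsilon>)) + (\<delta> * den - num)"
    unfolding num_def den_def by (simp add: algebra_simps power2_eq_square)
  also have "\<dots> < 0" using key assms(1-3) by simp
  finally show "b * (-1 + \<epsilon>) + \<tau> * (1 + \<epsilon>) * (1 - (\<delta> - \<epsilon>)) < - (b * \<tau> * (1 + \<epsilon>) * (\<delta> - \<epsilon>))"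
    by linarith
qed

lemma eventually_powr_mult_sum_le:
  fixes C k n q a :: real
  assumes "k + n * (1 - a) < - (q * a)" "k < - (q * a)" "0 < a" "a < 1" "0 < n" "0 < q"
  shows "\<forall>\<^sub>F M in at_top. C * M powr k * (2 + 4 * (M powr n) powr (1 - a) / (1 - a))
    \<le> (M powr q) powr (-a) / 3"
  using assms by real_asymp

lemma eventually_conv_scales:
  fixes \<tau> b \<epsilon> C a d :: real
  assumes \<tau>: "0 < \<tau>" and b: "1 < b" "\<tau> * (1 + \<epsilon>) < b" and \<epsilon>: "0 < \<epsilon>" and C: "0 < C"
    and a: "0 < a" "a < 1" and exponents: "b * (-1 + \<epsilon>) + \<tau> * (1 + \<epsilon>) * (1 - a) < - (b * \<tau> * (1 + \<epsilon>) * a)"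
  shows "\<forall>\<^sub>F M in at_top. conv_scales (M powr b) ((M powr b) powr \<tau>) (M powr \<tau>) (M powr (\<tau> * (1 + \<epsilon>)))
    ((M powr b) powr (\<tau> * (1 + \<epsilon>/2))) ((M powr b) powr (\<tau> * (1 + \<epsilon>))) (C * (M powr b) powr (-1 + \<epsilon>)) a d"
proof -
  have W: "0 < sq_weight_total" using sq_weight_total_ge_1 by simp
  have \<tau>b: "\<tau> < b" using b \<tau> \<epsilon> by (smt (verit) mult_le_cancel_left1)
  have middle_K: "\<forall>\<^sub>F M in at_top. C * (M powr b) powr (-1 + \<epsilon>) * (2 + 4 * (M powr (\<tau> * (1 + \<epsilon>))) powr (1 - a) / (1 - a))
    \<le> ((M powr b) powr (\<tau> * (1 + \<epsilon>))) powr (-a) / 3"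
  proof -
    have "0 \<le> \<tau> * (1 + \<epsilon>) * (1 - a)" using \<tau> \<epsilon> a by simp
    hence "b * (-1 + \<epsilon>) < - (b * \<tau> * (1 + \<epsilon>) * a)" using exponents by linarith
    hence "\<forall>\<^sub>F M in at_top. C * M powr (b * (-1 + \<epsilon>)) * (2 + 4 * (M powr (\<tau> * (1 + \<epsilon>))) powr (1 - a) / (1 - a))
      \<le> (M powr (b * (\<tau> * (1 + \<epsilon>)))) powr (-a) / 3"
      using exponents \<tau> \<epsilon> b a by (intro eventually_powr_mult_sum_le) (auto simp: mult.assoc)
    thus ?thesis using eventually_gt_at_top[of 0] by eventually_elim (simp add: powr_powr)
  qed
  have "\<forall>\<^sub>F M::real in at_top. 0 < M" by (rule eventually_gt_at_top)
  moreover have "\<forall>\<^sub>F M in at_top. M powr \<tau> * 16 \<le> (M powr b) powr \<tau>"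
    using \<tau> b by real_asymp
  moreover have "\<forall>\<^sub>F M in at_top. 2 * M powr (\<tau> * (1 + \<epsilon>)) \<le> M powr b"
    using b by real_asymp
  moreover have "\<forall>\<^sub>F M in at_top. M powr (\<tau> * (1 + \<epsilon>)) * 4 \<le> (M powr b) powr (\<tau> * (1 + \<epsilon>))"
    using b \<tau> \<epsilon> by real_asymp
  moreover have "\<forall>\<^sub>F M in at_top. (M powr b) powr (\<tau> * (1 + \<epsilon>/2)) * 2 \<le> (M powr b) powr (\<tau> * (1 + \<epsilon>))"
    using b \<tau> \<epsilon> by real_asymp
  moreover have "\<forall>\<^sub>F M in at_top. 1 \<le> (M powr b) powr (\<tau> * (1 + \<epsilon>/2))"
    using b \<tau> \<epsilon> by real_asymp
  moreover have "\<forall>\<^sub>F M in at_top. 131072 * ((M powr b) powr \<tau>)\<^sup>2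
      * exp (- sqrt ((M powr b) powr (\<tau> * (1 + \<epsilon>/2)) / (M powr b) powr \<tau>) / 4) \<le> 1 / (3 * sq_weight_total)"
    using b \<tau> \<epsilon> W by real_asymp
  moreover have "\<forall>\<^sub>F M in at_top. exp (- (1/2) * sqrt (M powr b / 2 / M powr \<tau>))
      * (1 + C * (M powr b) powr (-1 + \<epsilon>) * (1 + ((M powr b) powr (\<tau> * (1 + \<epsilon>/2)))\<^sup>2)) * sq_weight_total
      \<le> (M powr b) powr (-d)"
    using b \<tau> \<epsilon> W C \<tau>b by real_asymp
  moreover have "\<forall>\<^sub>F M in at_top. exp (- (1/2) * sqrt (M powr (\<tau> * (1 + \<epsilon>)) / M powr \<tau>))
      * (1 + C * (M powr b) powr (-1 + \<epsilon>) * (1 + ((M powr b) powr (\<tau> * (1 + \<epsilon>/2)))\<^sup>2)) * sq_weight_total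
      \<le> ((M powr b) powr (\<tau> * (1 + \<epsilon>))) powr (-a) / 3"
    using b \<tau> \<epsilon> W C \<tau>b by real_asymp
  moreover have "\<forall>\<^sub>F M in at_top. exp (- sqrt ((M powr b) powr (\<tau> * (1 + \<epsilon>/2)) / (M powr b) powr \<tau>))
      * (2 + 4 * (M powr (\<tau> * (1 + \<epsilon>))) powr (1 - a) / (1 - a)) \<le> ((M powr b) powr (\<tau> * (1 + \<epsilon>))) powr (-a) / 3"
    using b \<tau> \<epsilon> \<tau>b a by real_asymp
  moreover have "\<forall>\<^sub>F M in at_top. 6 * (2 * M powr (\<tau> * (1 + \<epsilon>)) + 1)
      \<le> exp (sqrt ((M powr b) powr (\<tau> * (1 + \<epsilon>)) / (M powr b) powr \<tau>) / 4)"
    using b \<tau> \<epsilon> by real_asymp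
  moreover have "\<forall>\<^sub>F M in at_top. 3 * (2 * (M powr b) powr (\<tau> * (1 + \<epsilon>/2)) + 1)
      * (1 + C * (M powr b) powr (-1 + \<epsilon>) * (1 + ((M powr b) powr (\<tau> * (1 + \<epsilon>/2)))\<^sup>2))
      \<le> exp (sqrt ((M powr b) powr (\<tau> * (1 + \<epsilon>)) / (M powr b) powr \<tau>) / 2)"
    using b \<tau> \<epsilon> C by real_asymp
  ultimately show ?thesis using middle_K
    by eventually_elim (use C a in \<open>auto simp: conv_scales_def\<close>)
qed

theorem lemma7:
  fixes \<tau>2 b \<epsilon> C\<epsilon> :: real
  assumes "\<tau>2 \<ge> 2" and "b > \<tau>2" and "\<epsilon> > 0" and "C\<epsilon> > 0"
    and "(b * (1 - \<epsilon>) - \<tau>2 * (1 + \<epsilon>)^2) / (\<tau>2 * (b - 1) * (1 + \<epsilon>)) - \<epsilon> > 0"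
  shows "\<exists>Mstar::real. \<forall>M::real. M \<ge> Mstar \<longrightarrow>
    (let M' = M powr b;
         \<delta> = (b * (1 - \<epsilon>) - \<tau>2 * (1 + \<epsilon>)^2) / (\<tau>2 * (b - 1) * (1 + \<epsilon>))
     in \<forall>F G :: int \<Rightarrow> complex.
      (F 0 = 1 \<and>
       (\<forall>s. 1 \<le> \<bar>s\<bar> \<and> real_of_int \<bar>s\<bar> < M' \<longrightarrow> F s = 0) \<and>
       (\<forall>s. M' \<le> real_of_int \<bar>s\<bar> \<and> real_of_int \<bar>s\<bar> \<le> M' powr (\<tau>2 * (1 + \<epsilon>/2)) \<longrightarrow>
            norm (F s) \<le> C\<epsilon> * M' powr (-1 + \<epsilon>)) \<and>
       (\<forall>s. real_of_int \<bar>s\<bar> \<ge> M' powr (\<tau>2 * (1 + \<epsilon>/2)) \<longrightarrow>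
            norm (F s) \<le> exp (- sqrt (\<bar>real_of_int s / M' powr \<tau>2\<bar>))) \<and>
       norm (G 0) \<le> 2 \<and>
       (\<forall>s. 0 < \<bar>s\<bar> \<and> real_of_int \<bar>s\<bar> \<le> M powr (\<tau>2 * (1 + \<epsilon>)) \<longrightarrow>
            norm (G s) \<le> 2 * real_of_int \<bar>s\<bar> powr (-\<delta> + \<epsilon>)) \<and>
       (\<forall>s. real_of_int \<bar>s\<bar> \<ge> M powr (\<tau>2 * (1 + \<epsilon>)) \<longrightarrow>
            norm (G s) \<le> exp (- (1/2) * sqrt (\<bar>real_of_int s / M powr \<tau>2\<bar>))))
      \<longrightarrow>
      (\<forall>s. real_of_int \<bar>s\<bar> \<le> M powr (\<tau>2 * (1 + \<epsilon>)) \<longrightarrow>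
            norm (zconv F G s - G s) \<le> M' powr (-\<delta>)) \<and>
      (\<forall>s. M powr (\<tau>2 * (1 + \<epsilon>)) < real_of_int \<bar>s\<bar> \<and> real_of_int \<bar>s\<bar> \<le> M' powr (\<tau>2 * (1 + \<epsilon>)) \<longrightarrow>
            norm (zconv F G s) \<le> real_of_int \<bar>s\<bar> powr (-\<delta> + \<epsilon>)) \<and>
      (\<forall>s. real_of_int \<bar>s\<bar> > M' powr (\<tau>2 * (1 + \<epsilon>)) \<longrightarrow>
            norm (zconv F G s) \<le> exp (- (1/2) * sqrt (\<bar>real_of_int s / M' powr \<tau>2\<bar>))))"
proof -
  define \<delta> where "\<delta> = (b * (1 - \<epsilon>) - \<tau>2 * (1 + \<epsilon>)^2) / (\<tau>2 * (b - 1) * (1 + \<epsilon>))"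
  have exponents: "\<delta> - \<epsilon> < 1" "\<tau>2 * (1 + \<epsilon>) < b"
    "b * (-1 + \<epsilon>) + \<tau>2 * (1 + \<epsilon>) * (1 - (\<delta> - \<epsilon>)) < - (b * \<tau>2 * (1 + \<epsilon>) * (\<delta> - \<epsilon>))"
    using delta_exponent_bounds[OF assms(1-3) _ \<delta>_def] assms(5) unfolding \<delta>_def by simp_all
  have "\<forall>\<^sub>F M in at_top. conv_scales (M powr b) ((M powr b) powr \<tau>2) (M powr \<tau>2) (M powr (\<tau>2 * (1 + \<epsilon>)))
    ((M powr b) powr (\<tau>2 * (1 + \<epsilon>/2))) ((M powr b) powr (\<tau>2 * (1 + \<epsilon>)))
    (C\<epsilon> * (M powr b) powr (-1 + \<epsilon>)) (\<delta> - \<epsilon>) \<delta>"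
    using assms exponents by (intro eventually_conv_scales) (auto simp: \<delta>_def)
  then obtain Mstar where Mstar: "\<And>M. Mstar \<le> M \<Longrightarrow> conv_scales (M powr b) ((M powr b) powr \<tau>2) (M powr \<tau>2)
    (M powr (\<tau>2 * (1 + \<epsilon>))) ((M powr b) powr (\<tau>2 * (1 + \<epsilon>/2))) ((M powr b) powr (\<tau>2 * (1 + \<epsilon>)))
    (C\<epsilon> * (M powr b) powr (-1 + \<epsilon>)) (\<delta> - \<epsilon>) \<delta>"
    unfolding eventually_at_top_linorder by blast
  have "- \<delta> + \<epsilon> = - (\<delta> - \<epsilon>)" by simp
  then show ?thesis
    unfolding Let_def \<delta>_def[symmetric] using conv_scales.conv_estimates[OF Mstar] by auto
qed

end
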